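(* The series $\widetilde H_{a_1,\dots,a_r}(z)$ and $\Psi(z)\widetilde H_{a_1,\dots,a_r}(z)$, where $r\ge1$ and $(a_1,\dots,a_r)$ ranges over (pairwise distinct) tuples of positive integers none of which is divisible by $3$, together with the series $1$, are linearly independent over $(\mathbb Z/3\mathbb Z)[z]$, and consequently also over $(\mathbb Z/3^\gamma\mathbb Z)[z]$ for every positive integer $\gamma$, and over $\mathbb Z[z]$.
   Context: $\Psi(z)=\prod_{j\ge0}\bigl(1+z^{3^j}\bigr)$. For positive integers $a_1,\dots,a_r$, $$\widetilde H_{a_1,\dots,a_r}(z)=\sum_{k_1>\dots>k_r\ge0}\prod_{j=1}^{r}\left(\frac{z^{3^{k_j}}(1+z^{3^{k_j}})}{1+z^{3^{k_j+1}}}\right)^{a_j},$$ a formal power series in $z$ with integer coefficients (rational functions expanded as power series in $z$); $\widetilde H_{\emptyset}=1$. *)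

theory Defs
  imports "HOL-Computational_Algebra.Computational_Algebra"
begin

text \<open>Quotient of formal power series over the integers: the unique series r with
  r * q = p (used only for denominators q with constant term 1, where it exists,
  i.e. the power series expansion of the rational function p/q).\<close>
definition fps_quot :: "int fps \<Rightarrow> int fps \<Rightarrow> int fps" where
  "fps_quot p q = (THE r. r * q = p)"

text \<open>Psi(z) = prod_{j>=0} (1 + z^(3^j)); the n-th coefficient is the n-th coefficient
  of the finite product over j < n+1 (higher factors do not affect it).\<close>
definition Psi :: "int fps" where
  "Psi = Abs_fps (\<lambda>n. fps_nth (\<Prod>j<Suc n. 1 + fps_X ^ (3 ^ j)) n)"

definition hterm :: "nat \<Rightarrow> int fps" where
  "hterm k = fps_quot (fps_X ^ (3 ^ k) * (1 + fps_X ^ (3 ^ k))) (1 + fps_X ^ (3 ^ Suc k))"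

fun Htr :: "nat \<Rightarrow> nat list \<Rightarrow> int fps" where
  "Htr N [] = 1"
| "Htr N (a # as) = (\<Sum>k<N. hterm k ^ a * Htr k as)"

text \<open>H~_{a_1..a_r}: the formal (coefficientwise convergent) infinite sum over
  k_1 > ... > k_r >= 0.  Since hterm k has order 3^k, only terms with k_1 <= n
  contribute to the n-th coefficient.\<close>
definition Htilde :: "nat list \<Rightarrow> int fps" where
  "Htilde as = Abs_fps (\<lambda>n. fps_nth (Htr (Suc n) as) n)"

text \<open>Index set of the family: (False, []) stands for the series 1; (False, a) for
  H~_a and (True, a) for Psi * H~_a, where a is a nonempty tuple of positive
  integers none divisible by 3.\<close>
definition fam_index :: "(bool \<times> nat list) set" where
  "fam_index = {(False, [])} \<union>
     {(b, as). as \<noteq> [] \<and> (\<forall>x\<in>set as. 0 < x \<and> \<not> 3 dvd x)}"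

definition fam :: "bool \<times> nat list \<Rightarrow> int fps" where
  "fam i = (if fst i then Psi else 1) * Htilde (snd i)"

text \<open>Linear independence over (Z/mZ)[z] (m > 0) of a family of integer series:
  whenever an integer-polynomial combination is congruent to 0 mod m (coefficientwise),
  all coefficient polynomials are congruent to 0 mod m.\<close>
definition lin_indep_mod :: "int \<Rightarrow> ('i \<Rightarrow> int fps) \<Rightarrow> 'i set \<Rightarrow> bool" where
  "lin_indep_mod m F I \<longleftrightarrow>
     (\<forall>S p. finite S \<longrightarrow> S \<subseteq> I \<longrightarrow>
        (\<forall>n. m dvd fps_nth (\<Sum>i\<in>S. fps_of_poly (p i) * F i) n) \<longrightarrow>
        (\<forall>i\<in>S. \<forall>n. m dvd coeff (p i) n))"

definition lin_indep_int :: "('i \<Rightarrow> int fps) \<Rightarrow> 'i set \<Rightarrow> bool" where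
  "lin_indep_int F I \<longleftrightarrow>
     (\<forall>S p. finite S \<longrightarrow> S \<subseteq> I \<longrightarrow>
        (\<Sum>i\<in>S. fps_of_poly (p i) * F i) = 0 \<longrightarrow> (\<forall>i\<in>S. p i = 0))"

end

theory Submission
  imports Defs "HOL-Library.Sublist" "Berlekamp_Zassenhaus.Finite_Field"
begin

text \<open>Everything is reduced modulo 3.  Over \<open>\<bbbF>\<^sub>3\<close> the Frobenius identity
  \<open>(1 + z)^(3^N) = 1 + z^(3^N)\<close> shows that \<open>\<Psi>\<close> reduces to a series \<open>\<psi>\<close> with \<open>\<psi>\<^sup>2 (1 + z) = 1\<close>,
  and that the \<open>k\<close>-th basic term reduces to \<open>\<tau>^(3^k)\<close>, where \<open>\<tau> = z \<psi>\<^sup>4 = \<psi>\<^sup>2 - \<psi>\<^sup>4\<close>.  Hence the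
  reductions \<open>h a\<close> of the series \<open>H~\<^sub>a\<close> satisfy the functional equation
  \<open>h (b @ [m]) = h (b @ [m])\<^sup>3 + \<tau>^m h b\<^sup>3\<close>, so \<open>(h a)\<^sup>3\<close> is an \<open>\<bbbF>\<^sub>3[\<psi>]\<close>-linear combination of the
  \<open>h j\<close> over the prefixes \<open>j\<close> of \<open>a\<close>.

  Given a relation \<open>\<Sum> c\<^sub>a(\<psi>) h a = 0\<close>, cubing it and subtracting a multiple of the original
  relation removes one of the nonzero coefficients of maximal length without killing the relation.
  For a relation minimal in this respect this forces an identity \<open>u\<^sup>3 - C\<^sup>2 u = C\<^sup>2 G\<close> in \<open>\<bbbF>\<^sub>3[\<psi>]\<close>
  with \<open>deg G = deg C + 4M\<close> and \<open>3 \<nmid> M\<close>, which is impossible by comparing degrees.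

  A polynomial in \<open>z\<close> becomes a polynomial in \<open>\<psi>\<close> after multiplication by a power of \<open>\<psi>\<close>, since
  \<open>z \<psi>\<^sup>2 = 1 - \<psi>\<^sup>2\<close>, and \<open>\<psi>\<close> is irrational over \<open>\<bbbF>\<^sub>3(z)\<close>; this gives independence over \<open>\<bbbF>\<^sub>3[z]\<close>.
  Dividing a relation by 3 lifts independence to \<open>\<bbbZ>/3\<^sup>\<gamma>\<close>, and since no nonzero integer is divisible
  by every power of 3, also to \<open>\<bbbZ>\<close>.\<close>

section \<open>Characteristic three\<close>

lemma three_eq_0_if_CHAR_3:
  assumes "CHAR('a::semiring_1) = 3"
  shows "(3::'a) = 0"
  using of_nat_CHAR[where 'a='a] unfolding assms by simp

lemma cube_add_CHAR_3:
  fixes x y :: "'a::comm_ring_1"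
  assumes "CHAR('a) = 3"
  shows "(x + y) ^ 3 = x ^ 3 + y ^ 3"
proof -
  have "(x + y) ^ 3 = x ^ 3 + y ^ 3 + 3 * (x ^ 2 * y + x * y ^ 2)"
    by (simp add: power3_eq_cube power2_eq_square algebra_simps)
  then show ?thesis by (simp add: three_eq_0_if_CHAR_3[OF assms])
qed

lemma cube_sum_CHAR_3:
  fixes f :: "'b \<Rightarrow> 'a::comm_ring_1"
  assumes "CHAR('a) = 3"
  shows "(\<Sum>i\<in>S. f i) ^ 3 = (\<Sum>i\<in>S. f i ^ 3)"
  by (induction S rule: infinite_finite_induct) (simp_all add: cube_add_CHAR_3[OF assms])

lemma add_power_three_power_CHAR_3:
  fixes x y :: "'a::comm_ring_1"
  assumes "CHAR('a) = 3"
  shows "(x + y) ^ 3 ^ k = x ^ 3 ^ k + y ^ 3 ^ k"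
proof (induction k)
  case (Suc k)
  have "(x + y) ^ 3 ^ Suc k = ((x + y) ^ 3 ^ k) ^ 3"
    by (simp add: power_mult[symmetric] mult.commute)
  also have "\<dots> = x ^ 3 ^ Suc k + y ^ 3 ^ Suc k"
    unfolding Suc cube_add_CHAR_3[OF assms] by (simp add: power_mult[symmetric] mult.commute)
  finally show ?case .
qed simp

datatype three = T0 | T1 | T2

lemma UNIV_three: "(UNIV :: three set) = {T0, T1, T2}"
  using three.exhaust by auto

lemma CARD_three: "CARD(three) = 3"
  unfolding UNIV_three by simp

instance three :: finite
  by standard (simp add: card_ge_0_finite CARD_three)

instance three :: prime_card
  by standard (simp add: CARD_three)

type_synonym F3 = "three mod_ring"

lemma CHAR_F3: "CHAR(F3) = 3"
  by (simp add: CARD_three)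

lemma CHAR_F3_fps: "CHAR(F3 fps) = 3"
  by (simp add: CARD_three)

lemma of_int_F3_eq_0_iff: "(of_int k :: F3) = 0 \<longleftrightarrow> 3 dvd k"
  using of_int_eq_0_iff_char_dvd[where 'a=F3] unfolding CHAR_F3 by simp

section \<open>Reduction modulo 3\<close>

definition fps_mod3 :: "int fps \<Rightarrow> F3 fps" where
  "fps_mod3 f = Abs_fps (\<lambda>n. of_int (f $ n))"

lemma fps_mod3_nth [simp]: "fps_mod3 f $ n = of_int (f $ n)"
  by (simp add: fps_mod3_def)

lemma fps_mod3_0 [simp]: "fps_mod3 0 = 0"
  by (rule fps_ext) simp

lemma fps_mod3_add [simp]: "fps_mod3 (f + g) = fps_mod3 f + fps_mod3 g"
  by (rule fps_ext) simp

lemma fps_mod3_one [simp]: "fps_mod3 1 = 1"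
  by (rule fps_ext) simp

lemma fps_mod3_X [simp]: "fps_mod3 fps_X = fps_X"
  by (rule fps_ext) simp

lemma fps_mod3_mult [simp]: "fps_mod3 (f * g) = fps_mod3 f * fps_mod3 g"
  by (rule fps_ext) (simp add: fps_mult_nth)

lemma fps_mod3_power [simp]: "fps_mod3 (f ^ n) = fps_mod3 f ^ n"
  by (induction n) simp_all

lemma fps_mod3_sum [simp]: "fps_mod3 (\<Sum>i\<in>S. f i) = (\<Sum>i\<in>S. fps_mod3 (f i))"
  by (induction S rule: infinite_finite_induct) simp_all

lemma fps_mod3_prod [simp]: "fps_mod3 (\<Prod>i\<in>S. f i) = (\<Prod>i\<in>S. fps_mod3 (f i))"
  by (induction S rule: infinite_finite_induct) simp_all

lemma fps_mod3_fps_of_poly: "fps_mod3 (fps_of_poly p) = fps_of_poly (map_poly of_int p)"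
  by (rule fps_ext) (simp add: coeff_map_poly)

lemma fps_mod3_eq_0_iff: "fps_mod3 f = 0 \<longleftrightarrow> (\<forall>n. 3 dvd f $ n)"
  by (simp add: fps_eq_iff of_int_F3_eq_0_iff)

definition eq_below :: "nat \<Rightarrow> 'a::comm_ring_1 fps \<Rightarrow> 'a fps \<Rightarrow> bool" where
  "eq_below N f g \<longleftrightarrow> (\<forall>i<N. f $ i = g $ i)"

lemma eq_below_refl [simp]: "eq_below N f f"
  by (simp add: eq_below_def)

lemma eq_below_sym: "eq_below N f g \<Longrightarrow> eq_below N g f"
  by (simp add: eq_below_def)

lemma eq_below_trans: "eq_below N f g \<Longrightarrow> eq_below N g h \<Longrightarrow> eq_below N f h"
  by (simp add: eq_below_def)

lemma eq_below_mono: "eq_below N f g \<Longrightarrow> M \<le> N \<Longrightarrow> eq_below M f g"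
  by (simp add: eq_below_def)

lemma eq_below_add: "eq_below N f f' \<Longrightarrow> eq_below N g g' \<Longrightarrow> eq_below N (f + g) (f' + g')"
  by (simp add: eq_below_def)

lemma eq_below_mult: "eq_below N f f' \<Longrightarrow> eq_below N g g' \<Longrightarrow> eq_below N (f * g) (f' * g')"
  unfolding eq_below_def fps_mult_nth by (auto intro!: sum.cong)

lemma eq_below_power: "eq_below N f f' \<Longrightarrow> eq_below N (f ^ k) (f' ^ k)"
  by (induction k) (simp_all add: eq_below_mult)

lemma eq_below_sum_0: "(\<And>i. i \<in> S \<Longrightarrow> eq_below N (f i) 0) \<Longrightarrow> eq_below N (\<Sum>i\<in>S. f i) 0"
  by (simp add: eq_below_def fps_sum_nth)

lemma eq_below_X_power_mult_0: "N \<le> k \<Longrightarrow> eq_below N (fps_X ^ k * f) 0"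
  by (simp add: eq_below_def fps_X_power_mult_nth)

lemma fps_eqI_eq_below: "(\<And>N. eq_below N f g) \<Longrightarrow> f = g"
  by (rule fps_ext) (auto simp: eq_below_def)

section \<open>The reduction of \<open>\<Psi>\<close>\<close>

lemma less_three_power: "n < (3::nat) ^ n"
  by (induction n) auto

definition Psi_partial :: "nat \<Rightarrow> F3 fps" where
  "Psi_partial N = (\<Prod>j<N. 1 + fps_X ^ 3 ^ j)"

definition psi :: "F3 fps" where
  "psi = fps_mod3 Psi"

lemma psi_nth: "psi $ n = Psi_partial (Suc n) $ n"
proof -
  have "psi $ n = of_int ((\<Prod>j<Suc n. 1 + fps_X ^ 3 ^ j :: int fps) $ n)"
    by (simp add: psi_def Psi_def)
  also have "\<dots> = Psi_partial (Suc n) $ n"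
    by (simp only: Psi_partial_def fps_mod3_prod fps_mod3_add fps_mod3_one fps_mod3_power fps_mod3_X
        flip: fps_mod3_nth)
  finally show ?thesis .
qed

lemma Psi_partial_eq_below: "M \<le> N \<Longrightarrow> eq_below M (Psi_partial N) (Psi_partial M)"
proof (induction N)
  case (Suc N)
  show ?case
  proof (cases "M = Suc N")
    case False
    then have "M \<le> N" using Suc by simp
    have "Psi_partial (Suc N) = Psi_partial N + fps_X ^ 3 ^ N * Psi_partial N"
      by (simp add: Psi_partial_def algebra_simps)
    moreover have "eq_below M (fps_X ^ 3 ^ N * Psi_partial N) 0"
      using \<open>M \<le> N\<close> less_three_power[of N] by (intro eq_below_X_power_mult_0) simp
    ultimately show ?thesis
      using eq_below_add[OF Suc.IH[OF \<open>M \<le> N\<close>]] by fastforce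
  qed simp
qed simp

lemma psi_eq_below: "eq_below N psi (Psi_partial N)"
  unfolding eq_below_def psi_nth
  using Psi_partial_eq_below by (metis Suc_leI eq_below_def lessI)

lemma Psi_partial_square: "Psi_partial N ^ 2 * (1 + fps_X) = (1 + fps_X) ^ 3 ^ N"
proof (induction N)
  case (Suc N)
  have "Psi_partial (Suc N) ^ 2 * (1 + fps_X)
      = (Psi_partial N ^ 2 * (1 + fps_X)) * (1 + fps_X ^ 3 ^ N) ^ 2"
    by (simp add: Psi_partial_def power2_eq_square algebra_simps)
  also have "\<dots> = (1 + fps_X) ^ 3 ^ N * ((1 + fps_X) ^ 3 ^ N) ^ 2"
    by (simp add: Suc add_power_three_power_CHAR_3[OF CHAR_F3_fps])
  also have "\<dots> = (1 + fps_X) ^ 3 ^ Suc N"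
    by (simp add: power_mult[symmetric] power_add[symmetric])
  finally show ?case .
qed (simp add: Psi_partial_def)

lemma psi_square_mult: "psi ^ 2 * (1 + fps_X) = 1"
proof (rule fps_eqI_eq_below)
  fix N
  have "eq_below N (psi ^ 2 * (1 + fps_X)) (Psi_partial N ^ 2 * (1 + fps_X))"
    by (intro eq_below_mult eq_below_power psi_eq_below eq_below_refl)
  moreover have "Psi_partial N ^ 2 * (1 + fps_X) = 1 + fps_X ^ 3 ^ N * 1"
    by (simp add: Psi_partial_square add_power_three_power_CHAR_3[OF CHAR_F3_fps])
  moreover have "eq_below N (1 + fps_X ^ 3 ^ N * 1) 1"
    using eq_below_add[OF eq_below_refl eq_below_X_power_mult_0[of N "3 ^ N" 1]]
      less_three_power[of N] by simp
  ultimately show "eq_below N (psi ^ 2 * (1 + fps_X)) 1"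
    using eq_below_trans by metis
qed

lemma X_mult_psi_square: "fps_X * psi ^ 2 = 1 - psi ^ 2"
  using psi_square_mult by (simp add: algebra_simps)

lemma psi_nth_1: "psi $ 1 = 1"
  unfolding psi_nth Psi_partial_def
  by (simp add: fps_mult_nth numeral_2_eq_2 lessThan_Suc)

lemma psi_nonconstant: "psi \<noteq> fps_const c"
proof
  assume "psi = fps_const c"
  then have "psi $ 1 = fps_const c $ 1" by (rule arg_cong)
  then show False using psi_nth_1 by simp
qed

section \<open>The reduction of \<open>H\<close>\<close>

definition tau :: "F3 fps" where
  "tau = fps_X * psi ^ 4"

lemma tau_eq: "tau = psi ^ 2 - psi ^ 4"
proof -
  have "tau = (fps_X * psi ^ 2) * psi ^ 2"
    by (simp add: tau_def power_add[symmetric] mult_ac)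
  then show ?thesis
    by (simp add: X_mult_psi_square algebra_simps power_add[symmetric])
qed

lemma hterm_mult: "hterm k * (1 + fps_X ^ 3 ^ Suc k) = fps_X ^ 3 ^ k * (1 + fps_X ^ 3 ^ k)"
proof -
  let ?q = "1 + fps_X ^ 3 ^ Suc k :: int fps"
  let ?p = "fps_X ^ 3 ^ k * (1 + fps_X ^ 3 ^ k) :: int fps"
  have q0: "?q $ 0 * 1 = 1" by simp
  define r where "r = ?p * fps_right_inverse ?q 1"
  have r: "r * ?q = ?p"
    using fps_right_inverse[OF q0] unfolding r_def by (simp add: mult.assoc mult.commute)
  have "?q \<noteq> 0"
    using q0 by (metis fps_zero_nth mult_zero_left zero_neq_one)
  then have "hterm k = r"
    unfolding hterm_def fps_quot_def
  proof (intro the_equality)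
    fix r' assume "r' * ?q = ?p"
    then show "r' = r" using r \<open>?q \<noteq> 0\<close> by (metis mult_right_cancel)
  qed (rule r)
  then show ?thesis using r by simp
qed

lemma fps_mod3_hterm: "fps_mod3 (hterm k) = tau ^ 3 ^ k"
proof -
  have one_plus_X_nz: "(1 + fps_X :: F3 fps) ^ n \<noteq> 0" for n
  proof -
    have "(1 + fps_X :: F3 fps) $ 0 = 1" by simp
    then show ?thesis by (metis fps_zero_nth power_not_zero zero_neq_one)
  qed
  have psi4: "psi ^ 4 * (1 + fps_X) ^ 2 = 1"
    using psi_square_mult by (metis power_mult_distrib power_mult mult_2_right numeral_Bit0 one_power2)
  have "fps_mod3 (hterm k) * (1 + fps_X) ^ 3 ^ Suc k = fps_X ^ 3 ^ k * (1 + fps_X) ^ 3 ^ k"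
    using arg_cong[OF hterm_mult[of k], of fps_mod3]
    by (simp only: fps_mod3_mult fps_mod3_add fps_mod3_one fps_mod3_power fps_mod3_X
        add_power_three_power_CHAR_3[OF CHAR_F3_fps] power_one)
  moreover have "tau ^ 3 ^ k * (1 + fps_X) ^ 3 ^ Suc k
      = fps_X ^ 3 ^ k * ((psi ^ 4 * (1 + fps_X) ^ 2) ^ 3 ^ k * (1 + fps_X) ^ 3 ^ k)"
    unfolding tau_def
    by (simp add: power_mult_distrib power_mult[symmetric] power_add[symmetric] algebra_simps)
  ultimately show ?thesis
    using one_plus_X_nz by (metis psi4 power_one mult_1 mult_right_cancel)
qed

fun htr :: "nat \<Rightarrow> nat list \<Rightarrow> F3 fps" where
  "htr N [] = 1"
| "htr N (a # as) = (\<Sum>k<N. (tau ^ 3 ^ k) ^ a * htr k as)"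

lemma fps_mod3_Htr: "fps_mod3 (Htr N as) = htr N as"
  by (induction N as rule: htr.induct) (simp_all add: fps_mod3_hterm)

lemma power_three_power_cube:
  fixes x :: "'a::monoid_mult"
  shows "((x ^ 3 ^ k) ^ m) ^ 3 = (x ^ 3 ^ Suc k) ^ m"
  by (simp add: power_mult[symmetric] mult_ac)

lemma htr_snoc:
  "htr (Suc N) (b @ [m]) = htr N (b @ [m]) ^ 3 + tau ^ m * htr N b ^ 3"
proof (induction b arbitrary: N)
  case Nil
  have "htr (Suc N) [m] = (tau ^ 3 ^ 0) ^ m + (\<Sum>k<N. (tau ^ 3 ^ Suc k) ^ m)"
    by (simp only: htr.simps mult_1_right sum.lessThan_Suc_shift)
  also have "\<dots> = (\<Sum>k<N. (tau ^ 3 ^ k) ^ m) ^ 3 + tau ^ m"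
    by (simp only: cube_sum_CHAR_3[OF CHAR_F3_fps] power_three_power_cube) simp
  finally show ?case by simp
next
  case (Cons a b)
  have "htr 0 (b @ [m]) = 0" by (cases b) simp_all
  then have "htr (Suc N) ((a # b) @ [m])
      = (\<Sum>k<N. (tau ^ 3 ^ Suc k) ^ a * htr (Suc k) (b @ [m]))"
    by (simp only: append_Cons htr.simps sum.lessThan_Suc_shift) simp
  also have "\<dots> = (\<Sum>k<N. ((tau ^ 3 ^ k) ^ a) ^ 3 * (htr k (b @ [m]) ^ 3 + tau ^ m * htr k b ^ 3))"
    by (simp only: Cons power_three_power_cube)
  also have "\<dots> = (\<Sum>k<N. ((tau ^ 3 ^ k) ^ a * htr k (b @ [m])) ^ 3)
      + tau ^ m * (\<Sum>k<N. ((tau ^ 3 ^ k) ^ a * htr k b) ^ 3)"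
    by (simp add: power_mult_distrib distrib_left sum.distrib sum_distrib_left algebra_simps)
  finally show ?case
    by (simp add: cube_sum_CHAR_3[OF CHAR_F3_fps])
qed

lemma htr_eq_below:
  assumes "\<forall>x\<in>set as. 0 < x" and "M \<le> N"
  shows "eq_below M (htr N as) (htr M as)"
proof (cases as)
  case (Cons a as')
  have "0 < a" using assms(1) Cons by simp
  have "eq_below M ((tau ^ 3 ^ k) ^ a * htr k as') 0" if "M \<le> k" for k
  proof -
    have "(tau ^ 3 ^ k) ^ a = fps_X ^ (3 ^ k * a) * psi ^ (4 * (3 ^ k * a))"
      unfolding tau_def by (simp add: power_mult_distrib power_mult[symmetric] mult_ac)
    moreover have "M \<le> 3 ^ k * a"
    proof -
      have "M < 3 ^ k" using that less_three_power[of k] by simp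
      also have "3 ^ k \<le> 3 ^ k * a" using \<open>0 < a\<close> by simp
      finally show ?thesis by simp
    qed
    ultimately show ?thesis by (simp add: eq_below_X_power_mult_0 mult.assoc)
  qed
  then have "eq_below M (\<Sum>k\<in>{M..<N}. (tau ^ 3 ^ k) ^ a * htr k as') 0"
    by (intro eq_below_sum_0) simp
  moreover have "htr N as = htr M as + (\<Sum>k\<in>{M..<N}. (tau ^ 3 ^ k) ^ a * htr k as')"
    unfolding Cons htr.simps
    using sum.atLeastLessThan_concat[of 0 M N "\<lambda>k. (tau ^ 3 ^ k) ^ a * htr k as'"] assms(2)
    by (simp add: atLeast0LessThan)
  ultimately show ?thesis
    using eq_below_add[OF eq_below_refl[of M "htr M as"]] by fastforce
qed simp

definition h :: "nat list \<Rightarrow> F3 fps" where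
  "h as = fps_mod3 (Htilde as)"

lemma h_eq_below:
  assumes "\<forall>x\<in>set as. 0 < x"
  shows "eq_below N (h as) (htr N as)"
  unfolding eq_below_def
proof (intro allI impI)
  fix i assume "i < N"
  then have "eq_below (Suc i) (htr N as) (htr (Suc i) as)"
    using htr_eq_below[OF assms] by simp
  moreover have "h as $ i = htr (Suc i) as $ i"
    unfolding h_def Htilde_def fps_mod3_nth fps_nth_Abs_fps by (simp only: fps_mod3_Htr[symmetric] fps_mod3_nth)
  ultimately show "h as $ i = htr N as $ i"
    by (simp add: eq_below_def)
qed

lemma h_Nil: "h [] = 1"
  by (rule fps_ext) (simp add: h_def Htilde_def)

lemma h_snoc:
  assumes "\<forall>x\<in>set (b @ [m]). 0 < x"
  shows "h (b @ [m]) = h (b @ [m]) ^ 3 + tau ^ m * h b ^ 3"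
proof (rule fps_eqI_eq_below)
  fix N
  have b: "\<forall>x\<in>set b. 0 < x" using assms by simp
  have "eq_below N (h (b @ [m])) (htr (Suc N) (b @ [m]))"
    by (rule eq_below_mono[OF h_eq_below[OF assms]]) simp
  moreover have "eq_below N (htr N (b @ [m]) ^ 3 + tau ^ m * htr N b ^ 3)
      (h (b @ [m]) ^ 3 + tau ^ m * h b ^ 3)"
    using eq_below_sym[OF h_eq_below[OF assms]] eq_below_sym[OF h_eq_below[OF b]]
    by (intro eq_below_add eq_below_mult eq_below_power eq_below_refl)
  ultimately show "eq_below N (h (b @ [m])) (h (b @ [m]) ^ 3 + tau ^ m * h b ^ 3)"
    unfolding htr_snoc by (rule eq_below_trans)
qed

definition eval_fps :: "'a::comm_ring_1 poly \<Rightarrow> 'a fps \<Rightarrow> 'a fps" where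
  "eval_fps p f = poly (map_poly fps_const p) f"

lemma eval_fps_pCons: "eval_fps (pCons a p) f = fps_const a + f * eval_fps p f"
  by (cases "a = 0 \<and> p = 0") (simp_all add: eval_fps_def map_poly_pCons)

lemma eval_fps_0 [simp]: "eval_fps 0 f = 0"
  by (simp add: eval_fps_def)

lemma eval_fps_1 [simp]: "eval_fps 1 f = 1"
  by (simp add: eval_fps_def)

lemma eval_fps_const: "eval_fps [:a:] f = fps_const a"
  by (simp add: eval_fps_pCons)

lemma eval_fps_X: "eval_fps [:0, 1:] f = f"
  by (simp add: eval_fps_pCons)

lemma eval_fps_add [simp]: "eval_fps (p + q) f = eval_fps p f + eval_fps q f"
proof -
  have "map_poly fps_const (p + q) = map_poly fps_const p + map_poly fps_const q"
    by (rule poly_eqI) (simp add: coeff_map_poly)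
  then show ?thesis by (simp add: eval_fps_def)
qed

lemma eval_fps_mult [simp]: "eval_fps (p * q) f = eval_fps p f * eval_fps q f"
proof -
  have fps_const_sum: "fps_const (\<Sum>i\<in>S. g i) = (\<Sum>i\<in>S. fps_const (g i))" for g and S :: "nat set"
    by (induction S rule: infinite_finite_induct) (simp_all flip: fps_const_add)
  have "map_poly fps_const (p * q) = map_poly fps_const p * map_poly fps_const q"
    by (rule poly_eqI) (simp add: coeff_map_poly coeff_mult fps_const_sum)
  then show ?thesis by (simp add: eval_fps_def)
qed

lemma eval_fps_smult [simp]: "eval_fps (Polynomial.smult a p) f = fps_const a * eval_fps p f"
  using eval_fps_mult[of "[:a:]" p f] by (simp add: eval_fps_const)

lemma eval_fps_uminus [simp]: "eval_fps (- p) f = - eval_fps p f"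
  using eval_fps_add[of "- p" p f] by (simp add: eq_neg_iff_add_eq_0)

lemma eval_fps_diff [simp]: "eval_fps (p - q) f = eval_fps p f - eval_fps q f"
  using eval_fps_add[of p "- q" f] by simp

lemma eval_fps_power [simp]: "eval_fps (p ^ n) f = eval_fps p f ^ n"
  by (induction n) simp_all

lemma eval_fps_sum [simp]: "eval_fps (\<Sum>i\<in>S. g i) f = (\<Sum>i\<in>S. eval_fps (g i) f)"
  by (induction S rule: infinite_finite_induct) simp_all

lemma eval_fps_nth_0: "eval_fps p f $ 0 = poly p (f $ 0)"
  by (induction p) (simp_all add: eval_fps_pCons)

lemma eval_fps_eq_0_iff:
  fixes f :: "'a::idom fps"
  assumes "\<And>c. f \<noteq> fps_const c"
  shows "eval_fps p f = 0 \<longleftrightarrow> p = 0"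
proof
  assume p: "eval_fps p f = 0"
  show "p = 0"
  proof (rule ccontr)
    assume "p \<noteq> 0"
    define a where "a = f $ 0"
    obtain q where q: "p = [:- a, 1:] ^ Polynomial.order a p * q" "\<not> [:- a, 1:] dvd q"
      using Polynomial.order_decomp[OF \<open>p \<noteq> 0\<close>] by blast
    have "eval_fps [:- a, 1:] f = f - fps_const a"
      by (simp add: eval_fps_pCons algebra_simps flip: fps_const_neg)
    then have "eval_fps [:- a, 1:] f \<noteq> 0"
      using assms[of a] by simp
    moreover have "eval_fps q f \<noteq> 0"
    proof
      assume "eval_fps q f = 0"
      then have "poly q a = 0" using eval_fps_nth_0[of q f] a_def by simp
      then show False using q(2) by (simp add: poly_eq_0_iff_dvd)
    qed
    ultimately have "eval_fps p f \<noteq> 0" by (subst q(1)) simp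
    then show False using p by simp
  qed
qed simp

definition tau_poly :: "F3 poly" where
  "tau_poly = [:0, 0, 1, 0, -1:]"

lemma degree_tau_poly: "degree tau_poly = 4"
  by (simp add: tau_poly_def)

lemma eval_fps_tau_poly: "eval_fps tau_poly psi = tau"
  by (simp add: tau_eq tau_poly_def eval_fps_pCons power2_eq_square power4_eq_xxxx algebra_simps
      flip: fps_const_neg)

lemma fps_of_poly_mult_psi_power:
  "degree P \<le> K \<Longrightarrow> \<exists>Q. fps_of_poly P * psi ^ (2 * K) = eval_fps Q psi"
proof (induction P arbitrary: K)
  case (pCons a P)
  show ?case
  proof (cases "P = 0")
    case True
    then show ?thesis
      by (intro exI[of _ "[:a:] * [:0, 1:] ^ (2 * K)"])
        (simp add: eval_fps_const eval_fps_X fps_of_poly_pCons)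
  next
    case False
    then obtain K' where K: "K = Suc K'" "degree P \<le> K'"
      using pCons.prems by (cases K) auto
    obtain Q where Q: "fps_of_poly P * psi ^ (2 * K') = eval_fps Q psi"
      using pCons.IH[OF K(2)] by blast
    have "fps_of_poly (pCons a P) * psi ^ (2 * K)
        = fps_const a * psi ^ (2 * K) + (fps_X * psi ^ 2) * (fps_of_poly P * psi ^ (2 * K'))"
      by (simp add: fps_of_poly_pCons K algebra_simps power_add[symmetric])
    also have "\<dots> = fps_const a * psi ^ (2 * K) + (1 - psi ^ 2) * eval_fps Q psi"
      by (simp only: Q X_mult_psi_square)
    also have "\<dots> = eval_fps ([:a:] * [:0, 1:] ^ (2 * K) + [:1, 0, -1:] * Q) psi"
      by (simp add: eval_fps_const eval_fps_X eval_fps_pCons power2_eq_square algebra_simps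
          flip: fps_const_neg)
    finally show ?thesis by blast
  qed
qed (intro exI[of _ 0], simp)

section \<open>Cubing a linear relation among the \<open>h\<close>\<close>

definition admissible :: "nat list \<Rightarrow> bool" where
  "admissible as \<longleftrightarrow> (\<forall>x\<in>set as. 0 < x \<and> \<not> 3 dvd x)"

lemma admissible_prefix: "admissible k \<Longrightarrow> prefix j k \<Longrightarrow> admissible j"
  unfolding admissible_def using set_mono_prefix by blast

definition prefix_weight :: "nat list \<Rightarrow> nat list \<Rightarrow> F3 poly" where
  "prefix_weight k j = (-1) ^ (length k - length j) * tau_poly ^ sum_list (drop (length j) k)"

lemma h_cube:
  "admissible k \<Longrightarrow> h k ^ 3 = (\<Sum>j\<in>set (prefixes k). eval_fps (prefix_weight k j) psi * h j)"
proof (induction k rule: rev_induct)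
  case Nil
  then show ?case by (simp add: h_Nil prefix_weight_def)
next
  case (snoc m b)
  have "admissible b" using snoc.prems by (simp add: admissible_def)
  have weight_snoc: "prefix_weight (b @ [m]) j = - (tau_poly ^ m * prefix_weight b j)"
    if "prefix j b" for j
  proof -
    have "length j \<le> length b" using that prefix_length_le by blast
    then show ?thesis by (simp add: prefix_weight_def Suc_diff_le power_add algebra_simps)
  qed
  have "h (b @ [m]) ^ 3 = h (b @ [m]) - tau ^ m * h b ^ 3"
    using h_snoc[of b m] snoc.prems by (simp add: admissible_def algebra_simps)
  also have "tau ^ m * h b ^ 3
      = - (\<Sum>j\<in>set (prefixes b). eval_fps (prefix_weight (b @ [m]) j) psi * h j)"
    by (simp add: snoc.IH[OF \<open>admissible b\<close>] weight_snoc eval_fps_tau_poly sum_distrib_left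
        sum_negf mult.assoc)
  also have "h (b @ [m]) - - (\<Sum>j\<in>set (prefixes b). eval_fps (prefix_weight (b @ [m]) j) psi * h j)
      = (\<Sum>j\<in>set (prefixes (b @ [m])). eval_fps (prefix_weight (b @ [m]) j) psi * h j)"
    by (auto simp: prefix_weight_def dest: prefix_length_le)
  finally show ?case .
qed

definition prefix_closed :: "nat list set \<Rightarrow> bool" where
  "prefix_closed V \<longleftrightarrow> (\<forall>k\<in>V. \<forall>j. prefix j k \<longrightarrow> j \<in> V)"

definition cube_coeff :: "nat list set \<Rightarrow> (nat list \<Rightarrow> F3 poly) \<Rightarrow> nat list \<Rightarrow> F3 poly" where
  "cube_coeff V c j = (\<Sum>k\<in>{k\<in>V. prefix j k}. c k ^ 3 * prefix_weight k j)"

lemma relation_cube: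
  assumes "finite V" "prefix_closed V" "\<forall>k\<in>V. admissible k"
    and "(\<Sum>k\<in>V. eval_fps (c k) psi * h k) = 0"
  shows "(\<Sum>j\<in>V. eval_fps (cube_coeff V c j) psi * h j) = 0"
proof -
  have prefixes: "{j\<in>V. prefix j k} = set (prefixes k)" if "k \<in> V" for k
    using that assms(2) unfolding prefix_closed_def by auto
  have "(\<Sum>j\<in>V. eval_fps (cube_coeff V c j) psi * h j)
      = (\<Sum>j\<in>V. \<Sum>k\<in>{k\<in>V. prefix j k}. eval_fps (c k ^ 3 * prefix_weight k j) psi * h j)"
    by (simp add: cube_coeff_def sum_distrib_right)
  also have "\<dots> = (\<Sum>k\<in>V. \<Sum>j\<in>{j\<in>V. prefix j k}. eval_fps (c k ^ 3 * prefix_weight k j) psi * h j)"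
    by (rule sum.swap_restrict[OF assms(1) assms(1)])
  also have "\<dots> = (\<Sum>k\<in>V. eval_fps (c k) psi ^ 3 * h k ^ 3)"
    using assms(3)
    by (intro sum.cong) (simp_all add: prefixes h_cube sum_distrib_left mult.assoc)
  also have "\<dots> = (\<Sum>k\<in>V. eval_fps (c k) psi * h k) ^ 3"
    by (simp add: cube_sum_CHAR_3[OF CHAR_F3_fps] power_mult_distrib)
  finally show ?thesis using assms(4) by simp
qed

lemma cube_coeff_maximal:
  assumes "j \<in> V" "\<forall>k\<in>V. length k \<le> length j"
  shows "cube_coeff V c j = c j ^ 3"
proof -
  have "k = j" if "k \<in> V" "prefix j k" for k
    using that assms(2) prefix_length_less[of j k] by (metis prefix_order.less_le not_less)
  then have "{k\<in>V. prefix j k} = {j}"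
    using assms(1) by auto
  then show ?thesis by (simp add: cube_coeff_def prefix_weight_def)
qed

lemma cube_coeff_parent:
  assumes "finite V" "j \<in> V" "\<forall>k\<in>V. length k \<le> Suc (length j)"
  shows "cube_coeff V c j = c j ^ 3 - (\<Sum>x\<in>{x. j @ [x] \<in> V}. c (j @ [x]) ^ 3 * tau_poly ^ x)"
proof -
  have children: "{k\<in>V. prefix j k} = insert j ((\<lambda>x. j @ [x]) ` {x. j @ [x] \<in> V})"
  proof (intro equalityI subsetI)
    fix k assume "k \<in> {k\<in>V. prefix j k}"
    then obtain zs where "k \<in> V" "k = j @ zs"
      by (auto simp: prefix_def)
    moreover have "length zs \<le> 1"
      using assms(3) calculation by fastforce
    ultimately show "k \<in> insert j ((\<lambda>x. j @ [x]) ` {x. j @ [x] \<in> V})"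
      by (cases zs) auto
  qed (use assms(2) in auto)
  have "finite {x. j @ [x] \<in> V}"
    using finite_vimageI[OF assms(1), of "\<lambda>x. j @ [x]"] by (simp add: vimage_def inj_def)
  then have "cube_coeff V c j = c j ^ 3 * prefix_weight j j
      + (\<Sum>x\<in>{x. j @ [x] \<in> V}. c (j @ [x]) ^ 3 * prefix_weight (j @ [x]) j)"
    unfolding cube_coeff_def children by (subst sum.insert) (auto simp: sum.reindex inj_on_def)
  then show ?thesis
    by (simp add: prefix_weight_def sum_negf)
qed

section \<open>Linear independence of the \<open>h\<close> over \<open>\<bbbF>\<^sub>3[\<psi>]\<close>\<close>

lemma degree_sum_dominant:
  fixes f :: "'b \<Rightarrow> 'a::comm_ring_1 poly"
  assumes "finite S" "i0 \<in> S" "\<forall>i\<in>S - {i0}. degree (f i) < degree (f i0)"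
  shows "degree (\<Sum>i\<in>S. f i) = degree (f i0)"
proof -
  have sum: "(\<Sum>i\<in>S. f i) = f i0 + (\<Sum>i\<in>S - {i0}. f i)"
    using assms by (simp add: sum.remove)
  show ?thesis
  proof (cases "S - {i0} = {}")
    case False
    then have "degree (\<Sum>i\<in>S - {i0}. f i) < degree (f i0)"
      using assms(1,3) by (intro degree_sum_less) auto
    then show ?thesis using sum by (simp add: degree_add_eq_left)
  next
    case True
    then show ?thesis by (simp only: sum sum.empty) simp
  qed
qed

lemma degree_sum_mult_power:
  fixes e :: "nat \<Rightarrow> 'a::idom poly"
  assumes "finite S" "M \<in> S" "0 < M" "e M \<noteq> 0" "0 < degree T"
    and "\<And>m. m \<in> S \<Longrightarrow> e m \<noteq> 0 \<Longrightarrow> degree (e m) = degree (e M) \<and> m \<le> M"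
  shows "degree (\<Sum>m\<in>S. e m * T ^ m) = degree (e M) + M * degree T"
proof -
  have degree_term: "degree (e m * T ^ m) = degree (e M) + m * degree T"
    if "m \<in> S" "e m \<noteq> 0" for m
  proof -
    have "T \<noteq> 0" using assms(5) by auto
    then show ?thesis using that assms(6) by (simp add: degree_mult_eq degree_power_eq)
  qed
  have "degree (\<Sum>m\<in>S. e m * T ^ m) = degree (e M * T ^ M)"
  proof (rule degree_sum_dominant[OF assms(1,2)], intro ballI)
    fix m assume m: "m \<in> S - {M}"
    show "degree (e m * T ^ m) < degree (e M * T ^ M)"
    proof (cases "e m = 0")
      case False
      then have "m < M" using assms(6) m by fastforce
      then show ?thesis
        using degree_term[of m] degree_term[OF assms(2,4)] m False assms(5) by simp
    qed (use degree_term[OF assms(2,4)] assms(3,5) in simp)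
  qed
  then show ?thesis using degree_term[OF assms(2,4)] by simp
qed

lemma degree_eq_if_cube_eq:
  fixes c C :: "'a::idom poly"
  assumes "c ^ 3 = C ^ 2 * c" "c \<noteq> 0"
  shows "degree c = degree C"
proof -
  have "c * c ^ 2 = c ^ 3" by (simp add: power3_eq_cube power2_eq_square)
  also have "\<dots> = c * C ^ 2" by (simp only: assms(1) mult.commute)
  finally have "c ^ 2 = C ^ 2" using assms(2) by simp
  moreover from this have "C \<noteq> 0" using assms(2) by auto
  ultimately have "2 * degree c = 2 * degree C"
    using assms(2) degree_power_eq[of c 2] degree_power_eq[of C 2] by simp
  then show ?thesis by simp
qed

text \<open>The right-hand side has degree \<open>3 deg C + m\<close>; the left-hand side has degree \<open>3 deg u\<close> if
  \<open>deg u > deg C\<close>, and at most \<open>3 deg C\<close> otherwise.\<close>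

lemma cube_minus_square_mult_neq:
  fixes C u G :: "'a::idom poly"
  assumes "C \<noteq> 0" "degree G = degree C + m" "\<not> 3 dvd m"
  shows "u ^ 3 - C ^ 2 * u \<noteq> C ^ 2 * G"
proof
  assume eq: "u ^ 3 - C ^ 2 * u = C ^ 2 * G"
  have "G \<noteq> 0" using assms(2,3) by auto
  then have degree_rhs: "degree (C ^ 2 * G) = 3 * degree C + m"
    using assms(1,2) by (simp add: degree_mult_eq degree_power_eq)
  show False
  proof (cases "degree C < degree u")
    case True
    then have "u \<noteq> 0" by auto
    then have "degree (u ^ 3 + - (C ^ 2 * u)) = degree (u ^ 3)"
      using True assms(1) by (intro degree_add_eq_left) (simp add: degree_mult_eq degree_power_eq)
    then have "3 * degree u = 3 * degree C + m"
      using eq degree_rhs \<open>u \<noteq> 0\<close> by (simp add: degree_power_eq)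
    then show False using assms(3) by presburger
  next
    case False
    have "degree (u ^ 3 - C ^ 2 * u) \<le> max (degree (u ^ 3)) (degree (C ^ 2 * u))"
      by (rule degree_diff_le_max)
    also have "\<dots> \<le> 3 * degree C"
      using False degree_power_le[of u 3] degree_power_le[of C 2] degree_mult_le[of "C ^ 2" u]
      by simp
    finally have "3 * degree C + m \<le> 3 * degree C"
      using eq degree_rhs by simp
    then show False using assms(3) by simp
  qed
qed

lemma recombination_maximal:
  assumes "j \<in> V" "\<forall>k\<in>V. length k \<le> length j" "C \<noteq> 0"
    and "C ^ 3 * c j = C * cube_coeff V c j"
  shows "c j ^ 3 = C ^ 2 * c j"
proof -
  have "C * (C ^ 2 * c j) = C * c j ^ 3"
    using assms(4) cube_coeff_maximal[OF assms(1,2)]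
    by (simp add: power3_eq_cube power2_eq_square mult_ac)
  then show ?thesis using assms(3) by simp
qed

lemma recombination_parent:
  assumes "finite V" "b \<in> V" "\<forall>k\<in>V. length k \<le> Suc (length b)" "C \<noteq> 0"
    and "\<And>x. b @ [x] \<in> V \<Longrightarrow> c (b @ [x]) ^ 3 = C ^ 2 * c (b @ [x])"
    and "C ^ 3 * c b = C * cube_coeff V c b"
  shows "c b ^ 3 - C ^ 2 * c b = C ^ 2 * (\<Sum>x\<in>{x. b @ [x] \<in> V}. c (b @ [x]) * tau_poly ^ x)"
proof -
  have "(\<Sum>x\<in>{x. b @ [x] \<in> V}. c (b @ [x]) ^ 3 * tau_poly ^ x)
      = C ^ 2 * (\<Sum>x\<in>{x. b @ [x] \<in> V}. c (b @ [x]) * tau_poly ^ x)"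
    using assms(5) by (simp add: sum_distrib_left mult.assoc)
  then have "C * (C ^ 2 * c b) = C * (c b ^ 3 - C ^ 2 * (\<Sum>x\<in>{x. b @ [x] \<in> V}. c (b @ [x]) * tau_poly ^ x))"
    using assms(6) cube_coeff_parent[OF assms(1-3), of c]
    by (simp add: power3_eq_cube power2_eq_square mult.assoc)
  then have "C ^ 2 * c b = c b ^ 3 - C ^ 2 * (\<Sum>x\<in>{x. b @ [x] \<in> V}. c (b @ [x]) * tau_poly ^ x)"
    using assms(4) by (simp only: mult_cancel_left) simp
  then show ?thesis by (simp add: algebra_simps)
qed

lemma degree_sum_tau_poly_power:
  fixes c :: "nat \<Rightarrow> F3 poly"
  assumes "finite X" "x0 \<in> X" "c x0 \<noteq> 0" "\<forall>x\<in>X. 0 < x \<and> \<not> 3 dvd x"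
    and "\<And>x. x \<in> X \<Longrightarrow> c x ^ 3 = C ^ 2 * c x"
  shows "\<exists>m. \<not> 3 dvd m \<and> degree (\<Sum>x\<in>X. c x * tau_poly ^ x) = degree C + m"
proof -
  define M where "M = Max {x\<in>X. c x \<noteq> 0}"
  have "M \<in> X" "c M \<noteq> 0" and below_M: "\<And>x. x \<in> X \<Longrightarrow> c x \<noteq> 0 \<Longrightarrow> x \<le> M"
    using Max_in[of "{x\<in>X. c x \<noteq> 0}"] assms(1-3) by (auto simp: M_def)
  have degree_c: "degree (c x) = degree C" if "x \<in> X" "c x \<noteq> 0" for x
    using that assms(5) by (intro degree_eq_if_cube_eq) simp_all
  have "0 < M" using assms(4) \<open>M \<in> X\<close> by blast
  have "degree (\<Sum>x\<in>X. c x * tau_poly ^ x) = degree C + M * 4"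
    using degree_sum_mult_power[where e = c and T = tau_poly,
        OF assms(1) \<open>M \<in> X\<close> \<open>0 < M\<close> \<open>c M \<noteq> 0\<close>]
      degree_c below_M \<open>M \<in> X\<close> \<open>c M \<noteq> 0\<close>
    by (simp add: degree_tau_poly)
  moreover have "\<not> 3 dvd M" using assms(4) \<open>M \<in> X\<close> by blast
  then have "\<not> 3 dvd M * 4" by presburger
  ultimately show ?thesis by blast
qed

text \<open>The heart of the argument: a relation cubed and recombined so as to kill the coefficient of
  \<open>a\<close> cannot vanish identically.  Otherwise every coefficient of maximal length is \<open>0\<close> or \<open>\<plusminus>c a\<close>,
  and the coefficient of the parent of \<open>a\<close> solves an equation excluded by
  cube_minus_square_mult_neq.\<close>

lemma cube_recombination_nonzero:
  assumes "finite V" "prefix_closed V" "\<forall>k\<in>V. admissible k \<and> length k \<le> length a"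
    and "a \<in> V" "a \<noteq> []" "c a \<noteq> 0"
  shows "\<exists>j\<in>V. c a ^ 3 * c j \<noteq> c a * cube_coeff V c j"
proof (rule ccontr)
  assume "\<not> ?thesis"
  then have recomb: "c a ^ 3 * c j = c a * cube_coeff V c j" if "j \<in> V" for j
    using that by auto
  define b where "b = butlast a"
  have a: "a = b @ [last a]" and length_a: "length a = Suc (length b)"
    using assms(5) by (simp_all add: b_def)
  have "b \<in> V"
    using assms(2,4) a unfolding prefix_closed_def by (metis prefixI)
  have children: "c (b @ [x]) ^ 3 = c a ^ 2 * c (b @ [x])" if "b @ [x] \<in> V" for x
    using recombination_maximal[OF that _ assms(6) recomb[OF that]] assms(3) length_a by simp
  have "b @ [last a] \<in> V" "c (b @ [last a]) \<noteq> 0"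
    using assms(4,6) unfolding a[symmetric] by simp_all
  define X where "X = {x. b @ [x] \<in> V}"
  have "finite X"
    using finite_vimageI[OF assms(1), of "\<lambda>x. b @ [x]"] by (simp add: X_def vimage_def inj_def)
  moreover have "last a \<in> X" "c (b @ [last a]) \<noteq> 0"
    using \<open>b @ [last a] \<in> V\<close> \<open>c (b @ [last a]) \<noteq> 0\<close> by (simp_all add: X_def)
  moreover have "\<forall>x\<in>X. 0 < x \<and> \<not> 3 dvd x"
    using assms(3) by (auto simp: X_def admissible_def)
  moreover have "c (b @ [x]) ^ 3 = c a ^ 2 * c (b @ [x])" if "x \<in> X" for x
    using children that by (simp add: X_def)
  ultimately obtain m where "\<not> 3 dvd m"
    and "degree (\<Sum>x\<in>X. c (b @ [x]) * tau_poly ^ x) = degree (c a) + m"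
    using degree_sum_tau_poly_power[of X "last a" "\<lambda>x. c (b @ [x])" "c a"] by blast
  moreover have "c b ^ 3 - c a ^ 2 * c b = c a ^ 2 * (\<Sum>x\<in>X. c (b @ [x]) * tau_poly ^ x)"
    unfolding X_def using assms(1,3,6) \<open>b \<in> V\<close> length_a children recomb[OF \<open>b \<in> V\<close>]
    by (intro recombination_parent) auto
  ultimately show False
    using cube_minus_square_mult_neq[OF assms(6)] by blast
qed

lemma relation_fewer_maximal_coeffs:
  assumes V: "finite V" "prefix_closed V" "\<forall>k\<in>V. admissible k \<and> length k \<le> length a"
    and a: "a \<in> V" "a \<noteq> []" "c a \<noteq> 0"
    and relation: "(\<Sum>k\<in>V. eval_fps (c k) psi * h k) = 0"
  obtains c' where "(\<Sum>k\<in>V. eval_fps (c' k) psi * h k) = 0" "\<exists>j\<in>V. c' j \<noteq> 0"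
    and "{k\<in>V. length k = length a \<and> c' k \<noteq> 0} \<subset> {k\<in>V. length k = length a \<and> c k \<noteq> 0}"
proof -
  define c' where "c' j = c a ^ 3 * c j - c a * cube_coeff V c j" for j
  have "(\<Sum>k\<in>V. eval_fps (c' k) psi * h k)
      = eval_fps (c a) psi ^ 3 * (\<Sum>k\<in>V. eval_fps (c k) psi * h k)
        - eval_fps (c a) psi * (\<Sum>k\<in>V. eval_fps (cube_coeff V c k) psi * h k)"
    by (simp add: c'_def sum_distrib_left sum_subtractf algebra_simps)
  then have relation': "(\<Sum>k\<in>V. eval_fps (c' k) psi * h k) = 0"
    using relation_cube[OF V(1,2)] V(3) relation by simp
  have nonzero: "\<exists>j\<in>V. c' j \<noteq> 0"
    using cube_recombination_nonzero[of V a c, OF V a] by (simp add: c'_def)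
  have c'_maximal: "c' k = c a ^ 3 * c k - c a * c k ^ 3" if "k \<in> V" "length k = length a" for k
    using cube_coeff_maximal[of k V c] that V(3) by (simp add: c'_def)
  define top where "top c = {k\<in>V. length k = length a \<and> c k \<noteq> 0}" for c :: "nat list \<Rightarrow> F3 poly"
  have "top c' \<subseteq> top c - {a}"
  proof
    fix k assume "k \<in> top c'"
    then have k: "k \<in> V" "length k = length a" "c' k \<noteq> 0" by (auto simp: top_def)
    then have "c k \<noteq> 0" using c'_maximal by auto
    moreover have "k \<noteq> a"
      using k c'_maximal[OF a(1) refl] by (auto simp: power3_eq_cube)
    ultimately show "k \<in> top c - {a}" using k by (simp add: top_def)
  qed
  moreover have "a \<in> top c" using a by (simp add: top_def)
  ultimately have "top c' \<subset> top c" by blast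
  then have "{k\<in>V. length k = length a \<and> c' k \<noteq> 0} \<subset> {k\<in>V. length k = length a \<and> c k \<noteq> 0}"
    by (simp only: top_def)
  with relation' nonzero show thesis by (rule that)
qed

lemma h_independent_step:
  assumes IH: "\<And>V c. finite V \<Longrightarrow> prefix_closed V \<Longrightarrow> \<forall>k\<in>V. admissible k \<and> length k \<le> d \<Longrightarrow>
      (\<Sum>k\<in>V. eval_fps (c k) psi * h k) = 0 \<Longrightarrow> \<forall>k\<in>V. c k = 0"
    and V: "finite V" "prefix_closed V" "\<forall>k\<in>V. admissible k \<and> length k \<le> Suc d"
  shows "(\<Sum>k\<in>V. eval_fps (c k) psi * h k) = 0 \<Longrightarrow> \<forall>k\<in>V. c k = 0"
proof (induction "card {k\<in>V. length k = Suc d \<and> c k \<noteq> 0}" arbitrary: c rule: less_induct)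
  case less
  show ?case
  proof (cases "\<exists>a\<in>V. length a = Suc d \<and> c a \<noteq> 0")
    case False
    define V' where "V' = {k\<in>V. length k \<le> d}"
    have zero_outside: "c k = 0" if "k \<in> V - V'" for k
    proof -
      have "k \<in> V" "length k = Suc d"
        using that V(3) by (auto simp: V'_def)
      then show ?thesis using False by blast
    qed
    have "finite V'" using V(1) by (simp add: V'_def)
    moreover have "prefix_closed V'"
      using V(2) by (auto simp: V'_def prefix_closed_def dest: prefix_length_le)
    moreover have "\<forall>k\<in>V'. admissible k \<and> length k \<le> d"
      using V(3) by (simp add: V'_def)
    moreover have "(\<Sum>k\<in>V'. eval_fps (c k) psi * h k) = (\<Sum>k\<in>V. eval_fps (c k) psi * h k)"
      by (rule sum.mono_neutral_left) (use V(1) zero_outside in \<open>auto simp: V'_def\<close>)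
    ultimately have "\<forall>k\<in>V'. c k = 0"
      using IH less.prems by presburger
    then show ?thesis using zero_outside by blast
  next
    case True
    then obtain a where a: "a \<in> V" "length a = Suc d" "c a \<noteq> 0" by blast
    have "\<forall>k\<in>V. admissible k \<and> length k \<le> length a" "a \<noteq> []"
      using V(3) a(2) by auto
    then obtain c' where c': "(\<Sum>k\<in>V. eval_fps (c' k) psi * h k) = 0" "\<exists>j\<in>V. c' j \<noteq> 0"
      and smaller: "{k\<in>V. length k = length a \<and> c' k \<noteq> 0} \<subset> {k\<in>V. length k = length a \<and> c k \<noteq> 0}"
      by (rule relation_fewer_maximal_coeffs[OF V(1,2) _ a(1) _ a(3) less.prems])
    have "card {k\<in>V. length k = Suc d \<and> c' k \<noteq> 0} < card {k\<in>V. length k = Suc d \<and> c k \<noteq> 0}"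
      using V(1) smaller unfolding a(2) by (intro psubset_card_mono) auto
    then have "\<forall>k\<in>V. c' k = 0"
      by (rule less.hyps[OF _ c'(1)])
    with c'(2) show ?thesis by blast
  qed
qed

lemma h_independent_prefix_closed:
  "finite V \<Longrightarrow> prefix_closed V \<Longrightarrow> \<forall>k\<in>V. admissible k \<and> length k \<le> d \<Longrightarrow>
    (\<Sum>k\<in>V. eval_fps (c k) psi * h k) = 0 \<Longrightarrow> \<forall>k\<in>V. c k = 0"
proof (induction d arbitrary: V c)
  case 0
  then have "V \<subseteq> {[]}" by auto
  show ?case
  proof (cases "V = {}")
    case False
    with \<open>V \<subseteq> {[]}\<close> have "V = {[]}" by blast
    then have "eval_fps (c []) psi = 0" using "0.prems"(4) by (simp add: h_Nil)
    then show ?thesis using \<open>V = {[]}\<close> eval_fps_eq_0_iff[OF psi_nonconstant] by simp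
  qed simp
next
  case (Suc d)
  show ?case
    by (rule h_independent_step[OF Suc.IH Suc.prems(1-3) Suc.prems(4)])
qed

theorem h_independent:
  assumes "finite U" "\<forall>k\<in>U. admissible k" "(\<Sum>k\<in>U. eval_fps (c k) psi * h k) = 0"
  shows "\<forall>k\<in>U. c k = 0"
proof -
  define V where "V = (\<Union>k\<in>U. set (prefixes k))"
  define c0 where "c0 k = (if k \<in> U then c k else 0)" for k
  have V: "j \<in> V \<longleftrightarrow> (\<exists>k\<in>U. prefix j k)" for j
    by (simp add: V_def)
  have "finite V" using assms(1) by (simp add: V_def)
  moreover have "prefix_closed V"
    unfolding prefix_closed_def by (meson V prefix_order.trans)
  moreover have "\<forall>j\<in>V. admissible j \<and> length j \<le> Max (length ` U)"
  proof
    fix j assume "j \<in> V"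
    then obtain k where "k \<in> U" "prefix j k" using V by blast
    moreover have "length k \<le> Max (length ` U)"
      using \<open>k \<in> U\<close> assms(1) by simp
    ultimately show "admissible j \<and> length j \<le> Max (length ` U)"
      using assms(2) admissible_prefix prefix_length_le by fastforce
  qed
  moreover have "U \<subseteq> V" using V by blast
  then have "(\<Sum>k\<in>V. eval_fps (c0 k) psi * h k) = (\<Sum>k\<in>U. eval_fps (c k) psi * h k)"
    using \<open>finite V\<close> by (subst sum.mono_neutral_right[of V U]) (auto simp: c0_def)
  ultimately have "\<forall>k\<in>V. c0 k = 0"
    using assms(3) by (intro h_independent_prefix_closed[where d = "Max (length ` U)"]) simp_all
  then show ?thesis using \<open>U \<subseteq> V\<close> unfolding c0_def by (metis subsetD)
qed

section \<open>Independence over \<open>\<bbbF>\<^sub>3[z]\<close>\<close>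

text \<open>\<open>\<psi>\<close> is irrational over \<open>\<bbbF>\<^sub>3(z)\<close>: \<open>A + \<psi> B = 0\<close> would give \<open>(1 + z) A\<^sup>2 = B\<^sup>2\<close>, whose sides have
  degrees of different parity.\<close>

lemma fps_of_poly_add_psi_mult_eq_0:
  fixes A B :: "F3 poly"
  assumes "fps_of_poly A + psi * fps_of_poly B = 0"
  shows "A = 0 \<and> B = 0"
proof -
  have A: "fps_of_poly A = - (psi * fps_of_poly B)"
    using assms by (simp add: eq_neg_iff_add_eq_0)
  have "fps_of_poly ([:1, 1:] * A ^ 2) = (1 + fps_X) * fps_of_poly A ^ 2"
    by (simp only: fps_of_poly_mult fps_of_poly_power fps_of_poly_pCons) simp
  also have "\<dots> = (1 + fps_X) * (psi * fps_of_poly B) ^ 2"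
    by (simp only: A power2_minus)
  also have "\<dots> = (psi ^ 2 * (1 + fps_X)) * fps_of_poly B ^ 2"
    by (simp add: power_mult_distrib mult_ac)
  also have "\<dots> = fps_of_poly (B ^ 2)"
    by (simp add: psi_square_mult fps_of_poly_power)
  finally have eq: "[:1, 1:] * A ^ 2 = B ^ 2"
    by (simp only: fps_of_poly_eq_iff)
  have "B = 0"
  proof (rule ccontr)
    assume "B \<noteq> 0"
    then have "A \<noteq> 0" using eq by auto
    then have "degree ([:1, 1:] * A ^ 2) = degree [:1, 1 :: F3:] + degree (A ^ 2)"
      by (intro degree_mult_eq) simp_all
    then have "degree ([:1, 1:] * A ^ 2) = 1 + 2 * degree A"
      using \<open>A \<noteq> 0\<close> by (simp add: degree_power_eq)
    moreover have "degree (B ^ 2) = 2 * degree B"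
      using \<open>B \<noteq> 0\<close> by (simp add: degree_power_eq)
    ultimately have "1 + 2 * degree A = 2 * degree B"
      using eq by simp
    then show False by presburger
  qed
  then show ?thesis using A by simp
qed

theorem h_psi_independent:
  assumes "finite S" "\<forall>as\<in>S. admissible as"
    and "(\<Sum>as\<in>S. (fps_of_poly (P as) + psi * fps_of_poly (Q as)) * h as) = 0"
  shows "\<forall>as\<in>S. P as = 0 \<and> Q as = 0"
proof -
  define K where "K = (\<Sum>as\<in>S. degree (P as) + degree (Q as))"
  have "\<exists>P' Q'. fps_of_poly (P as) * psi ^ (2 * K) = eval_fps P' psi
      \<and> fps_of_poly (Q as) * psi ^ (2 * K) = eval_fps Q' psi" if "as \<in> S" for as
  proof -
    have "degree (P as) + degree (Q as) \<le> K"
      unfolding K_def using assms(1) that by (intro member_le_sum) auto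
    then show ?thesis
      using fps_of_poly_mult_psi_power[of "P as" K] fps_of_poly_mult_psi_power[of "Q as" K] by auto
  qed
  then obtain P' Q' where PQ: "\<And>as. as \<in> S \<Longrightarrow>
      fps_of_poly (P as) * psi ^ (2 * K) = eval_fps (P' as) psi \<and>
      fps_of_poly (Q as) * psi ^ (2 * K) = eval_fps (Q' as) psi"
    by metis
  have combination: "eval_fps (P' as + [:0, 1:] * Q' as) psi
      = psi ^ (2 * K) * (fps_of_poly (P as) + psi * fps_of_poly (Q as))" if "as \<in> S" for as
    using PQ[OF that] by (simp add: eval_fps_pCons algebra_simps)
  then have "(\<Sum>as\<in>S. eval_fps (P' as + [:0, 1:] * Q' as) psi * h as)
      = psi ^ (2 * K) * (\<Sum>as\<in>S. (fps_of_poly (P as) + psi * fps_of_poly (Q as)) * h as)"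
    by (simp add: sum_distrib_left mult.assoc)
  then have "\<forall>as\<in>S. P' as + [:0, 1:] * Q' as = 0"
    using assms(3) by (intro h_independent[OF assms(1,2)]) simp
  moreover have "psi \<noteq> 0"
    using psi_nonconstant[of 0] by simp
  ultimately have "fps_of_poly (P as) + psi * fps_of_poly (Q as) = 0" if "as \<in> S" for as
    using combination[OF that] that by simp
  then show ?thesis using fps_of_poly_add_psi_mult_eq_0 by blast
qed

lemma fps_mod3_fam: "fps_mod3 (fam i) = (if fst i then psi else 1) * h (snd i)"
  by (simp add: fam_def h_def psi_def)

lemma admissible_fam_index: "i \<in> fam_index \<Longrightarrow> admissible (snd i)"
  by (auto simp: fam_index_def admissible_def)

lemma lin_indep_mod_3_fam: "lin_indep_mod 3 fam fam_index"
  unfolding lin_indep_mod_def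
proof (intro allI impI ballI)
  fix S :: "(bool \<times> nat list) set" and p i n
  assume S: "finite S" "S \<subseteq> fam_index"
    and dvd: "\<forall>n. 3 dvd (\<Sum>i\<in>S. fps_of_poly (p i) * fam i) $ n" and "i \<in> S"
  define A where "A = snd ` S"
  define P where "P b as = (if (b, as) \<in> S then map_poly of_int (p (b, as)) else (0 :: F3 poly))"
    for b as
  have "fps_mod3 (\<Sum>i\<in>S. fps_of_poly (p i) * fam i)
      = (\<Sum>(b, as)\<in>UNIV \<times> A. fps_of_poly (P b as) * ((if b then psi else 1) * h as))"
    unfolding fps_mod3_sum fps_mod3_mult fps_mod3_fps_of_poly
    using S(1) by (intro sum.mono_neutral_cong_left) (auto simp: A_def P_def fps_mod3_fam intro: rev_image_eqI)
  also have "\<dots> = (\<Sum>b\<in>UNIV. \<Sum>as\<in>A. fps_of_poly (P b as) * ((if b then psi else 1) * h as))"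
    by (rule sum.cartesian_product[symmetric])
  also have "\<dots> = (\<Sum>as\<in>A. \<Sum>b\<in>UNIV. fps_of_poly (P b as) * ((if b then psi else 1) * h as))"
    by (rule sum.swap)
  also have "\<dots> = (\<Sum>as\<in>A. (fps_of_poly (P False as) + psi * fps_of_poly (P True as)) * h as)"
    by (simp add: UNIV_bool algebra_simps)
  finally have "(\<Sum>as\<in>A. (fps_of_poly (P False as) + psi * fps_of_poly (P True as)) * h as) = 0"
    using dvd unfolding fps_mod3_eq_0_iff[symmetric] by metis
  then have "\<forall>as\<in>A. P False as = 0 \<and> P True as = 0"
    using S admissible_fam_index by (intro h_psi_independent) (auto simp: A_def)
  moreover obtain b as where i: "i = (b, as)" by (cases i)
  moreover have "as \<in> A" using \<open>i \<in> S\<close> i by (force simp: A_def)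
  ultimately have "P b as = 0" by (cases b) auto
  then have "map_poly (of_int :: int \<Rightarrow> F3) (p i) = 0"
    using i \<open>i \<in> S\<close> by (simp add: P_def)
  then have "(of_int (Polynomial.coeff (p i) n) :: F3) = 0"
    by (metis coeff_0 coeff_map_poly of_int_0)
  then show "3 dvd Polynomial.coeff (p i) n"
    by (simp add: of_int_F3_eq_0_iff)
qed

section \<open>From \<open>\<bbbZ>/3\<close> to \<open>\<bbbZ>/3\<^sup>\<gamma>\<close> and \<open>\<bbbZ>\<close>\<close>

lemma lin_indep_modD:
  assumes "lin_indep_mod m F I" "finite S" "S \<subseteq> I"
    and "\<forall>n. m dvd (\<Sum>i\<in>S. fps_of_poly (p i) * F i) $ n" "i \<in> S"
  shows "m dvd Polynomial.coeff (p i) n"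
  using assms unfolding lin_indep_mod_def by blast

lemma lin_indep_mod_mult:
  assumes m: "lin_indep_mod m F I" and n: "lin_indep_mod n F I" and "m \<noteq> 0"
  shows "lin_indep_mod (m * n) F I"
  unfolding lin_indep_mod_def
proof (intro allI impI ballI)
  fix S p i k assume S: "finite S" "S \<subseteq> I" and "i \<in> S"
    and dvd: "\<forall>k. m * n dvd (\<Sum>i\<in>S. fps_of_poly (p i) * F i) $ k"
  define q where "q i = map_poly (\<lambda>x. x div m) (p i)" for i
  have q: "p j = Polynomial.smult m (q j)" if "j \<in> S" for j
  proof (rule poly_eqI)
    fix k
    have "\<forall>k. m dvd (\<Sum>i\<in>S. fps_of_poly (p i) * F i) $ k"
      using dvd by (meson dvd_mult_left)
    then have "m dvd Polynomial.coeff (p j) k"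
      using lin_indep_modD[OF m S] that by blast
    then show "Polynomial.coeff (p j) k = Polynomial.coeff (Polynomial.smult m (q j)) k"
      by (simp add: q_def coeff_map_poly)
  qed
  have "(\<Sum>i\<in>S. fps_of_poly (p i) * F i) = fps_const m * (\<Sum>i\<in>S. fps_of_poly (q i) * F i)"
    unfolding sum_distrib_left
    by (intro sum.cong) (simp_all add: q fps_of_poly_smult mult.assoc)
  then have "m * n dvd m * (\<Sum>i\<in>S. fps_of_poly (q i) * F i) $ k" for k
    using dvd by (metis fps_mult_left_const_nth)
  then have "\<forall>k. n dvd (\<Sum>i\<in>S. fps_of_poly (q i) * F i) $ k"
    using \<open>m \<noteq> 0\<close> by simp
  then have "n dvd Polynomial.coeff (q i) k"
    using lin_indep_modD[OF n S] \<open>i \<in> S\<close> by blast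
  then show "m * n dvd Polynomial.coeff (p i) k"
    using q[OF \<open>i \<in> S\<close>] by simp
qed

lemma lin_indep_mod_power:
  assumes "lin_indep_mod m F I" "m \<noteq> 0"
  shows "0 < g \<Longrightarrow> lin_indep_mod (m ^ g) F I"
proof (induction g)
  case (Suc g)
  show ?case
  proof (cases "g = 0")
    case False
    then have "lin_indep_mod (m ^ g) F I" using Suc.IH by simp
    then show ?thesis using lin_indep_mod_mult[OF assms(1) _ assms(2)] by simp
  qed (use assms(1) in simp)
qed simp

lemma lin_indep_int_if_lin_indep_mod_powers:
  assumes "\<And>g. 0 < g \<Longrightarrow> lin_indep_mod (m ^ g) F I" "1 < m"
  shows "lin_indep_int F I"
  unfolding lin_indep_int_def
proof (intro allI impI ballI)
  fix S p i assume S: "finite S" "S \<subseteq> I" "(\<Sum>i\<in>S. fps_of_poly (p i) * F i) = 0" and "i \<in> S"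
  show "p i = 0"
  proof (rule poly_eqI, rule ccontr)
    fix k
    define x where "x = Polynomial.coeff (p i) k"
    assume "Polynomial.coeff (p i) k \<noteq> Polynomial.coeff 0 k"
    then have "x \<noteq> 0" by (simp add: x_def)
    define g where "g = Suc (nat \<bar>x\<bar>)"
    have "0 < g" by (simp add: g_def)
    then have "m ^ g dvd x"
      using lin_indep_modD[OF assms(1) S(1,2)] S(3) \<open>i \<in> S\<close> by (simp add: x_def)
    then have "m ^ g \<le> \<bar>x\<bar>"
      using dvd_imp_le_int[OF \<open>x \<noteq> 0\<close>] assms(2) by fastforce
    moreover have "int g < 2 ^ g"
      using less_exp[of g] by (metis of_nat_less_iff of_nat_numeral of_nat_power)
    moreover have "(2::int) ^ g \<le> m ^ g"
      using assms(2) by (intro power_mono) simp_all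
    ultimately show False by (simp add: g_def)
  qed
qed

theorem theorem2p6:
  shows "lin_indep_mod 3 fam fam_index
    \<and> (\<forall>\<gamma>::nat. 0 < \<gamma> \<longrightarrow> lin_indep_mod (3 ^ \<gamma>) fam fam_index)
    \<and> lin_indep_int fam fam_index"
proof -
  have powers: "lin_indep_mod (3 ^ \<gamma>) fam fam_index" if "0 < \<gamma>" for \<gamma>
    using lin_indep_mod_power[OF lin_indep_mod_3_fam] that by simp
  moreover have "(1::int) < 3" by simp
  ultimately have "lin_indep_int fam fam_index"
    by (rule lin_indep_int_if_lin_indep_mod_powers)
  then show ?thesis using lin_indep_mod_3_fam powers by blast
qed

end
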